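(* A set $S\subseteq\mathbb{M}^\Sigma$ is a masked semilinear set if and only if there exists an automaton $\mathcal{A}$ over $\Sigma$ such that $S=\Psi(\mathfrak{J}(\mathcal{A}))$.
   Context: Automata are nondeterministic B\"uchi automata $\langle\Sigma,Q,\delta,Q_0,\alpha\rangle$ over infinite words. For $w\in\Sigma^\omega$, $\Psi(w)\in\mathbb{N}_\infty^\Sigma$ gives for each letter its number of occurrences (or $\infty$ if infinitely many); $w\sim w'$ iff $\Psi(w)=\Psi(w')$; $\mathfrak{J}(\mathcal{A})=\{w\in\Sigma^\omega:\exists w'\sim w,\ w'\in\mathfrak{L}(\mathcal{A})\}$. $\mathbb{M}^\Sigma=\mathbb{N}_\infty^\Sigma\setminus\mathbb{N}^\Sigma$. A mask is $\mathfrak{m}\in\{0,\infty\}^\Sigma\setminus\{\vec 0\}$; $\vec x\oplus\mathfrak{m}$ has coordinate $\vec x(\sigma)$ where $\mathfrak{m}(\sigma)=0$ and $\infty$ elsewhere. A masked semilinear set is $\bigcup_{\mathfrak{m}}\{\vec x\oplus\mathfrak{m}:\vec x\in S_\mathfrak{m}\}$ over all masks, with each $S_\mathfrak{m}\subseteq\mathbb{N}^\Sigma$ semilinear (possibly empty). *)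

theory Defs
  imports Main "HOL-Library.Extended_Nat"
begin

text \<open>Alphabet: a finite type 'a (Sigma = UNIV). Infinite words: nat => 'a.
  Vectors in N_infinity^Sigma: 'a => enat; in N^Sigma: 'a => nat.\<close>

definition parikh :: "(nat \<Rightarrow> 'a) \<Rightarrow> ('a \<Rightarrow> enat)" where
  "parikh w = (\<lambda>\<sigma>. if finite {i. w i = \<sigma>} then enat (card {i. w i = \<sigma>}) else \<infinity>)"

text \<open>Nondeterministic Buchi automaton <Sigma, Q, delta, Q0, alpha>; states are natural
  numbers drawn from a finite set Q (no loss of generality, Q is finite).\<close>
record 'a nba =
  states :: "nat set"
  trans :: "nat \<Rightarrow> 'a \<Rightarrow> nat set"
  initial :: "nat set"
  accepting :: "nat set"

definition wf_nba :: "'a nba \<Rightarrow> bool" where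
  "wf_nba A \<longleftrightarrow> finite (states A) \<and> initial A \<subseteq> states A \<and> accepting A \<subseteq> states A
     \<and> (\<forall>q a. trans A q a \<subseteq> states A)"

definition accepting_run :: "'a nba \<Rightarrow> (nat \<Rightarrow> 'a) \<Rightarrow> (nat \<Rightarrow> nat) \<Rightarrow> bool" where
  "accepting_run A w r \<longleftrightarrow> r 0 \<in> initial A \<and> (\<forall>i. r (Suc i) \<in> trans A (r i) (w i))
     \<and> (\<exists>\<^sub>\<infinity> i. r i \<in> accepting A)"

definition lang :: "'a nba \<Rightarrow> (nat \<Rightarrow> 'a) set" where
  "lang A = {w. \<exists>r. accepting_run A w r}"

definition perm_closure :: "'a nba \<Rightarrow> (nat \<Rightarrow> 'a) set" where
  "perm_closure A = {w. \<exists>w'. parikh w' = parikh w \<and> w' \<in> lang A}"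

definition M_set :: "('a \<Rightarrow> enat) set" where
  "M_set = {v. \<exists>\<sigma>. v \<sigma> = \<infinity>}"

definition linear_set :: "('a \<Rightarrow> nat) \<Rightarrow> ('a \<Rightarrow> nat) set \<Rightarrow> ('a \<Rightarrow> nat) set" where
  "linear_set b P = {(\<lambda>\<sigma>. b \<sigma> + (\<Sum>p\<in>P. c p * p \<sigma>)) | c. True}"

definition semilinear :: "('a \<Rightarrow> nat) set \<Rightarrow> bool" where
  "semilinear S \<longleftrightarrow> (\<exists>L. finite L \<and> (\<forall>(b, P)\<in>L. finite P) \<and>
      S = (\<Union>(b, P)\<in>L. linear_set b P))"

text \<open>A mask is represented by the (nonempty) set of letters where it is infinity.\<close>
definition mask_add :: "('a \<Rightarrow> nat) \<Rightarrow> 'a set \<Rightarrow> ('a \<Rightarrow> enat)" where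
  "mask_add x m = (\<lambda>\<sigma>. if \<sigma> \<in> m then \<infinity> else enat (x \<sigma>))"

definition masked_semilinear :: "('a \<Rightarrow> enat) set \<Rightarrow> bool" where
  "masked_semilinear S \<longleftrightarrow> (\<exists>Sm :: 'a set \<Rightarrow> ('a \<Rightarrow> nat) set.
      (\<forall>m. m \<noteq> {} \<longrightarrow> semilinear (Sm m)) \<and>
      S = (\<Union>m\<in>{m. m \<noteq> {}}. (\<lambda>x. mask_add x m) ` Sm m))"

end

theory Submission
  imports Defs "HOL-Library.Set_Algebras" "HOL-Library.Function_Algebras"
    "HOL-Library.Omega_Words_Fun" "HOL-Library.Multiset" "HOL-Library.FuncSet"
begin

text \<open>
  Split an accepted word after the last occurrence of a letter that occurs only finitely often:
  its Parikh vector is the Parikh vector of a finite path from an initial state to a state q,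
  masked with the set m of letters occurring infinitely often, and from q some accepting run
  reads only letters of m, each of them infinitely often. Parikh vectors of finite paths form
  semilinear sets, by Kleene's state elimination and the closure of semilinear sets (finite
  unions of cosets b + P*, with P* the submonoid generated by P) under union, sum and star;
  this gives one direction.
  Conversely, a masked linear set (b + P*) \<oplus> m is the Parikh image of an automaton that
  reads a word with Parikh vector b, then words with Parikh vectors in P, and finally cycles
  through the letters of m forever; finitely many such automata are combined by a disjoint
  union. Permutation closure does not change Parikh images.
\<close>

section \<open>Submonoids and semilinear sets\<close>

inductive_set monoid_closure :: "'a::comm_monoid_add set \<Rightarrow> 'a set" for T where
  zero: "0 \<in> monoid_closure T"
| plus: "t \<in> T \<Longrightarrow> s \<in> monoid_closure T \<Longrightarrow> t + s \<in> monoid_closure T"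

lemma monoid_closure_add:
  "s \<in> monoid_closure T \<Longrightarrow> s' \<in> monoid_closure T \<Longrightarrow> s + s' \<in> monoid_closure T"
  by (induction s rule: monoid_closure.induct) (auto simp: add.assoc intro: monoid_closure.intros)

lemma monoid_closure_plus_subset: "monoid_closure T + monoid_closure T \<subseteq> monoid_closure T"
  by (auto elim!: set_plus_elim intro: monoid_closure_add)

lemma monoid_closure_mono: "s \<in> monoid_closure A \<Longrightarrow> A \<subseteq> B \<Longrightarrow> s \<in> monoid_closure B"
  by (induction s rule: monoid_closure.induct) (auto intro: monoid_closure.intros)

lemma monoid_closure_base: "T \<subseteq> monoid_closure T"
  using monoid_closure.plus[OF _ monoid_closure.zero] by fastforce

lemma monoid_closure_empty: "monoid_closure {} = {0}"
proof -
  have "s \<in> monoid_closure {} \<Longrightarrow> s = 0" for s :: 'a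
    by (induction s rule: monoid_closure.induct) auto
  then show ?thesis by (auto intro: monoid_closure.zero)
qed

lemma monoid_closure_Un: "monoid_closure (A \<union> B) = monoid_closure A + monoid_closure B"
proof
  show "monoid_closure (A \<union> B) \<subseteq> monoid_closure A + monoid_closure B"
  proof
    fix s assume "s \<in> monoid_closure (A \<union> B)"
    then show "s \<in> monoid_closure A + monoid_closure B"
    proof (induction s rule: monoid_closure.induct)
      case zero
      show ?case using set_plus_intro[OF monoid_closure.zero monoid_closure.zero] by simp
    next
      case (plus t s)
      then obtain a b where s: "s = a + b" "a \<in> monoid_closure A" "b \<in> monoid_closure B"
        by (auto elim: set_plus_elim)
      show ?case
      proof (cases "t \<in> A")
        case True
        then show ?thesis using s by (auto simp: add.assoc[symmetric] intro: monoid_closure.plus)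
      next
        case False
        with plus.hyps have "t + b \<in> monoid_closure B" using s by (auto intro: monoid_closure.plus)
        then show ?thesis using s by (metis add.left_commute set_plus_intro)
      qed
    qed
  qed
  show "monoid_closure A + monoid_closure B \<subseteq> monoid_closure (A \<union> B)"
    by (auto elim!: set_plus_elim intro!: monoid_closure_add elim: monoid_closure_mono)
qed

lemma monoid_closure_of_coset_subset:
  assumes "\<And>x y. x \<in> M \<Longrightarrow> y \<in> M \<Longrightarrow> x + y \<in> M"
  shows "monoid_closure (b +o M) \<subseteq> {0} \<union> b +o (monoid_closure {b} + M)"
proof
  fix s assume "s \<in> monoid_closure (b +o M)"
  then show "s \<in> {0} \<union> b +o (monoid_closure {b} + M)"
  proof (induction s rule: monoid_closure.induct)
    case zero then show ?case by simp
  next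
    case (plus t s)
    then obtain m where t: "t = b + m" "m \<in> M" by (auto simp: elt_set_plus_def)
    from plus.IH show ?case
    proof
      assume "s \<in> {0}"
      then have "t + s = b + (0 + m)" using t by simp
      moreover have "0 + m \<in> monoid_closure {b} + M"
        using t(2) by (intro set_plus_intro monoid_closure.zero)
      ultimately show ?thesis by (metis UnCI set_plus_intro2)
    next
      assume "s \<in> b +o (monoid_closure {b} + M)"
      then obtain k m' where s: "s = b + (k + m')" "k \<in> monoid_closure {b}" "m' \<in> M"
        by (auto simp: elt_set_plus_def set_plus_def)
      have "t + s = b + ((b + k) + (m + m'))" using t s by (simp add: add_ac)
      moreover have "b + k \<in> monoid_closure {b}" using s by (auto intro: monoid_closure.plus)
      moreover have "m + m' \<in> M" using assms t s by blast
      ultimately show ?thesis by (metis UnCI set_plus_intro set_plus_intro2)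
    qed
  qed
qed

lemma monoid_closure_of_coset:
  assumes "0 \<in> M" and "\<And>x y. x \<in> M \<Longrightarrow> y \<in> M \<Longrightarrow> x + y \<in> M"
  shows "monoid_closure (b +o M) = {0} \<union> b +o (monoid_closure {b} + M)"
proof
  have "b + (k + m) \<in> monoid_closure (b +o M)" if "k \<in> monoid_closure {b}" "m \<in> M" for k m
    using that
  proof (induction k arbitrary: m rule: monoid_closure.induct)
    case zero
    then show ?case using monoid_closure_base set_plus_intro2[of m M b] by auto
  next
    case (plus t k)
    then have "b + (t + k + m) = (b + 0) + (b + (k + m))" by (simp add: add_ac)
    moreover have "b + 0 \<in> b +o M" using assms(1) by (rule set_plus_intro2)
    ultimately show ?case using plus by (metis monoid_closure.plus)
  qed
  then show "{0} \<union> b +o (monoid_closure {b} + M) \<subseteq> monoid_closure (b +o M)"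
    by (auto simp: elt_set_plus_def set_plus_def intro: monoid_closure.zero)
qed (rule monoid_closure_of_coset_subset[OF assms(2)])

lemma coset_add_generator:
  "v \<in> b +o monoid_closure P \<Longrightarrow> p \<in> P \<Longrightarrow> v + p \<in> b +o monoid_closure P"
proof -
  assume "v \<in> b +o monoid_closure P" "p \<in> P"
  then obtain m where "m \<in> monoid_closure P" "v + p = b + (p + m)"
    by (auto simp: elt_set_plus_def add_ac)
  then show ?thesis using \<open>p \<in> P\<close> by (metis monoid_closure.plus set_plus_intro2)
qed

lemma linear_set_eq_coset:
  assumes "finite P"
  shows "linear_set b P = b +o monoid_closure P"
proof -
  have combination_in: "(\<lambda>\<sigma>. \<Sum>p\<in>P. c p * p \<sigma>) \<in> monoid_closure P" for c
    using assms
  proof (induction P rule: finite_induct)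
    case empty
    then show ?case by (simp add: zero_fun_def[symmetric] monoid_closure.zero)
  next
    case (insert p P)
    have "(\<lambda>\<sigma>. n * p \<sigma>) \<in> monoid_closure {p}" for n
    proof (induction n)
      case 0 then show ?case by (simp add: zero_fun_def[symmetric] monoid_closure.zero)
    next
      case (Suc n)
      have "(\<lambda>\<sigma>. Suc n * p \<sigma>) = p + (\<lambda>\<sigma>. n * p \<sigma>)" by (simp add: fun_eq_iff)
      then show ?case using Suc by (simp add: monoid_closure.plus)
    qed
    then have "(\<lambda>\<sigma>. c p * p \<sigma>) + (\<lambda>\<sigma>. \<Sum>p\<in>P. c p * p \<sigma>) \<in> monoid_closure (insert p P)"
      using insert.IH by (blast intro: monoid_closure_add monoid_closure_mono)
    then show ?case using insert.hyps by (simp add: plus_fun_def)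
  qed
  have closure_in: "y \<in> monoid_closure P \<Longrightarrow> \<exists>c. y = (\<lambda>\<sigma>. \<Sum>p\<in>P. c p * p \<sigma>)" for y
  proof (induction y rule: monoid_closure.induct)
    case zero
    show ?case by (rule exI[of _ "\<lambda>_. 0"]) (simp add: zero_fun_def)
  next
    case (plus t y)
    then obtain c where c: "y = (\<lambda>\<sigma>. \<Sum>p\<in>P. c p * p \<sigma>)" by blast
    have "t \<sigma> + (\<Sum>p\<in>P. c p * p \<sigma>) = (\<Sum>p\<in>P. (c(t := Suc (c t))) p * p \<sigma>)" for \<sigma>
      using plus.hyps assms by (simp add: sum.remove[of P t] algebra_simps)
    then show ?case unfolding c by (auto simp: fun_eq_iff)
  qed
  have "monoid_closure P = range (\<lambda>c. \<lambda>\<sigma>. \<Sum>p\<in>P. c p * p \<sigma>)"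
    using combination_in closure_in by blast
  then show ?thesis
    unfolding linear_set_def elt_set_plus_def by (auto simp: plus_fun_def)
qed

lemma semilinear_altdef:
  "semilinear S \<longleftrightarrow>
     (\<exists>L. finite L \<and> (\<forall>(b, P)\<in>L. finite P) \<and> S = (\<Union>(b, P)\<in>L. b +o monoid_closure P))"
proof -
  have "(\<Union>(b, P)\<in>L. linear_set b P) = (\<Union>(b, P)\<in>L. b +o monoid_closure P)"
    if "\<forall>(b, P)\<in>L. finite P" for L :: "(('a \<Rightarrow> nat) \<times> ('a \<Rightarrow> nat) set) set"
    using that by (intro SUP_cong) (auto simp: linear_set_eq_coset)
  then show ?thesis unfolding semilinear_def by metis
qed

lemma semilinear_family_cosets:
  assumes "\<And>i. i \<in> I \<Longrightarrow> semilinear (A i)"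
  shows "\<exists>L. \<forall>i\<in>I. finite (L i) \<and> (\<forall>(b, P)\<in>L i. finite P) \<and>
    A i = (\<Union>(b, P)\<in>L i. b +o monoid_closure P)"
  using assms unfolding semilinear_altdef by metis

lemma semilinear_empty: "semilinear {}"
  unfolding semilinear_def by (rule exI[of _ "{}"]) auto

lemma semilinear_Un: "semilinear A \<Longrightarrow> semilinear B \<Longrightarrow> semilinear (A \<union> B)"
  unfolding semilinear_def by (metis (no_types, lifting) UN_Un Un_iff finite_UnI)

lemma semilinear_UN:
  "finite I \<Longrightarrow> (\<And>i. i \<in> I \<Longrightarrow> semilinear (A i)) \<Longrightarrow> semilinear (\<Union>i\<in>I. A i)"
  by (induction I rule: finite_induct) (auto intro: semilinear_empty semilinear_Un)

lemma semilinear_coset: "finite P \<Longrightarrow> semilinear (b +o monoid_closure P)"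
  unfolding semilinear_altdef by (rule exI[of _ "{(b, P)}"]) auto

lemma semilinear_finite: "finite A \<Longrightarrow> semilinear A"
proof (induction A rule: finite_induct)
  case (insert v A)
  have "insert v A = v +o monoid_closure {} \<union> A"
    by (simp add: monoid_closure_empty elt_set_plus_def)
  then show ?case using semilinear_Un[OF semilinear_coset insert.IH] by simp
qed (rule semilinear_empty)

lemma set_plus_UN: "(\<Union>i\<in>I. A i) + (\<Union>j\<in>J. B j) = (\<Union>i\<in>I. \<Union>j\<in>J. A i + B j)"
  by (auto elim!: set_plus_elim)

lemma semilinear_plus: "semilinear A \<Longrightarrow> semilinear B \<Longrightarrow> semilinear (A + B)"
proof -
  assume "semilinear A" "semilinear B"
  then obtain LA LB
    where LA: "finite LA" "\<forall>(b, P)\<in>LA. finite P" "A = (\<Union>(b, P)\<in>LA. b +o monoid_closure P)"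
      and LB: "finite LB" "\<forall>(b, P)\<in>LB. finite P" "B = (\<Union>(b, P)\<in>LB. b +o monoid_closure P)"
    unfolding semilinear_altdef by blast
  have "A + B = (\<Union>(b, P)\<in>LA. \<Union>(b', P')\<in>LB. (b + b') +o monoid_closure (P \<union> P'))"
    unfolding LA(3) LB(3) set_plus_UN
    by (simp add: split_def set_plus_rearrange monoid_closure_Un)
  also have "semilinear \<dots>"
    using LA LB by (auto intro!: semilinear_UN semilinear_coset)
  finally show ?thesis .
qed

lemma semilinear_monoid_closure_coset:
  assumes "finite P"
  shows "semilinear (monoid_closure (b +o monoid_closure P))"
proof -
  have "monoid_closure (b +o monoid_closure P) = {0} \<union> b +o (monoid_closure {b} + monoid_closure P)"
    by (rule monoid_closure_of_coset) (auto intro: monoid_closure.zero monoid_closure_add)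
  also have "monoid_closure {b} + monoid_closure P = monoid_closure (insert b P)"
    using monoid_closure_Un[of "{b}" P] by simp
  finally have closure_eq: "monoid_closure (b +o monoid_closure P) = {0} \<union> b +o monoid_closure (insert b P)" .
  show ?thesis
    unfolding closure_eq using assms by (intro semilinear_Un semilinear_finite semilinear_coset) auto
qed

lemma semilinear_monoid_closure:
  assumes "semilinear A"
  shows "semilinear (monoid_closure A)"
proof -
  obtain L where L: "finite L" "\<forall>(b, P)\<in>L. finite P" "A = (\<Union>(b, P)\<in>L. b +o monoid_closure P)"
    using assms unfolding semilinear_altdef by blast
  have "semilinear (monoid_closure (\<Union>(b, P)\<in>L. b +o monoid_closure P))"
    using L(1,2)
  proof (induction L rule: finite_induct)
    case empty
    then show ?case by (simp add: monoid_closure_empty semilinear_finite)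
  next
    case (insert bP L)
    obtain b P where bP: "bP = (b, P)" by force
    have "monoid_closure (\<Union>(b, P)\<in>insert bP L. b +o monoid_closure P)
        = monoid_closure (b +o monoid_closure P) + monoid_closure (\<Union>(b, P)\<in>L. b +o monoid_closure P)"
      unfolding bP UN_insert prod.case by (rule monoid_closure_Un)
    then show ?case
      using insert bP by (simp add: semilinear_plus semilinear_monoid_closure_coset)
  qed
  then show ?thesis using L(3) by simp
qed

section \<open>Parikh vectors of finite paths\<close>

text \<open>\<open>parikh_path \<delta> X p v q\<close>: some path from \<open>p\<close> to \<open>q\<close> with Parikh vector \<open>v\<close> has all its
  intermediate states in \<open>X\<close>.\<close>

inductive parikh_path :: "('q \<Rightarrow> 'a \<Rightarrow> 'q set) \<Rightarrow> 'q set \<Rightarrow> 'q \<Rightarrow> ('a \<Rightarrow> nat) \<Rightarrow> 'q \<Rightarrow> bool"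
  for \<delta> X where
  empty: "parikh_path \<delta> X p 0 p"
| letter: "q \<in> \<delta> p a \<Longrightarrow> parikh_path \<delta> X p (count_list [a]) q"
| join: "s \<in> X \<Longrightarrow> parikh_path \<delta> X p v s \<Longrightarrow> parikh_path \<delta> X s v' q \<Longrightarrow> parikh_path \<delta> X p (v + v') q"

definition parikh_paths :: "('q \<Rightarrow> 'a \<Rightarrow> 'q set) \<Rightarrow> 'q set \<Rightarrow> 'q \<Rightarrow> 'q \<Rightarrow> ('a \<Rightarrow> nat) set" where
  "parikh_paths \<delta> X p q = {v. parikh_path \<delta> X p v q}"

lemma parikh_path_mono: "parikh_path \<delta> X p v q \<Longrightarrow> X \<subseteq> Y \<Longrightarrow> parikh_path \<delta> Y p v q"
  by (induction rule: parikh_path.induct) (auto intro: parikh_path.intros)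

lemma parikh_paths_join:
  "s \<in> X \<Longrightarrow> parikh_paths \<delta> X p s + parikh_paths \<delta> X s q \<subseteq> parikh_paths \<delta> X p q"
  unfolding parikh_paths_def by (auto elim!: set_plus_elim intro: parikh_path.join)

lemma parikh_paths_loops:
  "monoid_closure (parikh_paths \<delta> X s s) \<subseteq> parikh_paths \<delta> (insert s X) s s"
proof
  fix v assume "v \<in> monoid_closure (parikh_paths \<delta> X s s)"
  then show "v \<in> parikh_paths \<delta> (insert s X) s s"
  proof (induction v rule: monoid_closure.induct)
    case zero
    show ?case unfolding parikh_paths_def mem_Collect_eq by (rule parikh_path.empty)
  next
    case (plus t v)
    then show ?case unfolding parikh_paths_def
      by (blast intro: parikh_path.join parikh_path_mono)
  qed
qed

lemma parikh_paths_elim_join_at: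
  fixes \<delta> :: "'q \<Rightarrow> 'a \<Rightarrow> 'q set" and X :: "'q set" and s :: 'q
  defines "R \<equiv> parikh_paths \<delta> X" and "M \<equiv> monoid_closure (parikh_paths \<delta> X s s)"
  shows "(R p s \<union> (R p s + M + R s s)) + (R s q \<union> (R s s + M + R s q)) \<subseteq> R p s + M + R s q"
proof -
  have M: "{0} \<subseteq> M" "M + M \<subseteq> M" "R s s \<subseteq> M"
    unfolding M_def R_def by (simp_all add: monoid_closure.zero monoid_closure_plus_subset monoid_closure_base)
  have "R p s \<union> (R p s + M + R s s) \<subseteq> R p s + M"
  proof (rule Un_least)
    show "R p s \<subseteq> R p s + M" using set_plus_mono2[OF subset_refl M(1)] by simp
    have "R p s + M + R s s \<subseteq> R p s + (M + M)" using M by (simp add: add.assoc set_plus_mono2)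
    also have "\<dots> \<subseteq> R p s + M" using M by (simp add: set_plus_mono2)
    finally show "R p s + M + R s s \<subseteq> R p s + M" .
  qed
  moreover have "R s q \<union> (R s s + M + R s q) \<subseteq> M + R s q"
  proof (rule Un_least)
    show "R s q \<subseteq> M + R s q" using set_plus_mono2[OF M(1) subset_refl] by simp
    have "R s s + M + R s q \<subseteq> (M + M) + R s q" using M by (simp add: set_plus_mono2)
    also have "\<dots> \<subseteq> M + R s q" using M by (simp add: set_plus_mono2)
    finally show "R s s + M + R s q \<subseteq> M + R s q" .
  qed
  ultimately have "(R p s \<union> (R p s + M + R s s)) + (R s q \<union> (R s s + M + R s q))
      \<subseteq> R p s + (M + M) + R s q"
    by (metis add.assoc set_plus_mono2)
  also have "\<dots> \<subseteq> R p s + M + R s q" using M by (simp add: set_plus_mono2)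
  finally show ?thesis .
qed

lemma parikh_paths_elim_join_other:
  fixes \<delta> :: "'q \<Rightarrow> 'a \<Rightarrow> 'q set" and X :: "'q set" and s :: 'q
  defines "R \<equiv> parikh_paths \<delta> X" and "M \<equiv> monoid_closure (parikh_paths \<delta> X s s)"
  assumes t: "t \<in> X"
  shows "(R p t \<union> (R p s + M + R s t)) + (R t q \<union> (R t s + M + R s q))
    \<subseteq> R p q \<union> (R p s + M + R s q)"
proof -
  have join: "R p' t + R t q' \<subseteq> R p' q'" for p' q' unfolding R_def using t by (rule parikh_paths_join)
  have "R p t + (R t s + M + R s q) \<subseteq> R p s + M + R s q"
    using set_plus_mono2[OF set_plus_mono2[OF join[of p s] subset_refl[of M]] subset_refl[of "R s q"]]
    by (simp add: add.assoc)
  moreover have "(R p s + M + R s t) + R t q \<subseteq> R p s + M + R s q"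
    using set_plus_mono2[OF subset_refl[of "R p s + M"] join[of s q]] by (simp add: add.assoc)
  moreover have "(R p s + M + R s t) + (R t s + M + R s q) \<subseteq> R p s + M + R s q"
  proof -
    have "R s t + R t s \<subseteq> M" using join[of s s] unfolding M_def R_def by (meson monoid_closure_base order_trans)
    then have "M + (R s t + R t s) + M \<subseteq> M + M + M" by (intro set_plus_mono2 subset_refl)
    also have "\<dots> \<subseteq> M"
      using monoid_closure_plus_subset set_plus_mono2[OF monoid_closure_plus_subset subset_refl]
      unfolding M_def by (meson order_trans)
    finally have "R p s + (M + (R s t + R t s) + M) + R s q \<subseteq> R p s + M + R s q"
      by (intro set_plus_mono2 subset_refl)
    then show ?thesis by (simp only: add.assoc)
  qed
  ultimately show ?thesis using join[of p q] unfolding Un_set_plus set_plus_Un by blast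
qed

text \<open>Kleene's state elimination: a path through \<open>s\<close> splits at its first and last visit to \<open>s\<close>.\<close>

lemma parikh_paths_insert:
  "parikh_paths \<delta> (insert s X) p q = parikh_paths \<delta> X p q \<union>
     (parikh_paths \<delta> X p s + monoid_closure (parikh_paths \<delta> X s s) + parikh_paths \<delta> X s q)"
  (is "_ = ?E p q")
proof
  let ?R = "parikh_paths \<delta> X" and ?M = "monoid_closure (parikh_paths \<delta> X s s)"
  have E_join: "?E p t + ?E t q \<subseteq> ?E p q" if "t \<in> insert s X" for p t q
    using that parikh_paths_elim_join_at[of \<delta> X p s q] parikh_paths_elim_join_other[of t X \<delta> p s q]
    by auto
  show "parikh_paths \<delta> (insert s X) p q \<subseteq> ?E p q"
  proof
    fix v assume "v \<in> parikh_paths \<delta> (insert s X) p q"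
    then have "parikh_path \<delta> (insert s X) p v q" by (simp add: parikh_paths_def)
    then show "v \<in> ?E p q"
    proof (induction rule: parikh_path.induct)
      case (empty p)
      have "0 \<in> ?R p p" unfolding parikh_paths_def mem_Collect_eq by (rule parikh_path.empty)
      then show ?case by blast
    next
      case (letter q p a)
      then have "count_list [a] \<in> ?R p q"
        unfolding parikh_paths_def mem_Collect_eq by (rule parikh_path.letter)
      then show ?case by blast
    next
      case (join t p v v' q)
      then show ?case using E_join[OF join.hyps(1)] set_plus_intro[OF join.IH] by blast
    qed
  qed
  let ?R' = "parikh_paths \<delta> (insert s X)"
  have "?R p s \<subseteq> ?R' p s" "?R s q \<subseteq> ?R' s q" "?R p q \<subseteq> ?R' p q"
    by (auto simp: parikh_paths_def intro: parikh_path_mono)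
  then have "?E p q \<subseteq> ?R' p q \<union> (?R' p s + ?R' s s + ?R' s q)"
    using parikh_paths_loops by (intro Un_mono set_plus_mono2)
  also have "?R' p s + ?R' s s + ?R' s q \<subseteq> ?R' p q"
    using parikh_paths_join[of s "insert s X"] by (meson insertI1 order_trans set_plus_mono2 subset_refl)
  finally show "?E p q \<subseteq> ?R' p q" by blast
qed

lemma parikh_paths_empty: "parikh_paths \<delta> {} p q \<subseteq> insert 0 (range (\<lambda>a. count_list [a]))"
proof -
  have "parikh_path \<delta> {} p v q \<Longrightarrow> v \<in> insert 0 (range (\<lambda>a. count_list [a]))" for p v q
    by (induction rule: parikh_path.induct) auto
  then show ?thesis unfolding parikh_paths_def by blast
qed

lemma semilinear_parikh_paths:
  fixes \<delta> :: "'q \<Rightarrow> 'a::finite \<Rightarrow> 'q set"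
  assumes "finite X"
  shows "semilinear (parikh_paths \<delta> X p q)"
  using assms
proof (induction X arbitrary: p q rule: finite_induct)
  case empty
  show ?case by (rule semilinear_finite, rule finite_subset[OF parikh_paths_empty]) simp
next
  case (insert s X)
  then show ?case
    unfolding parikh_paths_insert
    by (intro semilinear_Un semilinear_plus semilinear_monoid_closure)
qed

fun path :: "('q \<Rightarrow> 'a \<Rightarrow> 'q set) \<Rightarrow> 'q \<Rightarrow> 'a list \<Rightarrow> 'q \<Rightarrow> bool" where
  "path \<delta> p [] q \<longleftrightarrow> p = q"
| "path \<delta> p (a # u) q \<longleftrightarrow> (\<exists>s\<in>\<delta> p a. path \<delta> s u q)"

lemma path_append: "path \<delta> p (u @ v) q \<longleftrightarrow> (\<exists>s. path \<delta> p u s \<and> path \<delta> s v q)"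
  by (induction u arbitrary: p) auto

lemma path_target_closed:
  "path \<delta> p u q \<Longrightarrow> p \<in> X \<Longrightarrow> (\<And>p a. \<delta> p a \<subseteq> X) \<Longrightarrow> q \<in> X"
  by (induction u arbitrary: p) auto

lemma count_list_Nil_fun: "count_list [] = 0"
  by (simp add: fun_eq_iff)

lemma count_list_append_fun: "count_list (u @ v) = count_list u + count_list v"
  by (simp add: fun_eq_iff)

lemma path_imp_parikh_path:
  assumes "path \<delta> p u q" and "\<And>p a. \<delta> p a \<subseteq> X"
  shows "parikh_path \<delta> X p (count_list u) q"
  using assms(1)
proof (induction u arbitrary: p)
  case Nil
  then have "p = q" by simp
  then show ?case unfolding count_list_Nil_fun using parikh_path.empty by metis
next
  case (Cons a u)
  then obtain s where s: "s \<in> \<delta> p a" "path \<delta> s u q" by auto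
  have "s \<in> X" using s(1) assms(2) by blast
  have "count_list (a # u) = count_list [a] + count_list u" by (simp add: fun_eq_iff)
  then show ?case
    using parikh_path.join[OF \<open>s \<in> X\<close> parikh_path.letter[of s \<delta> p a X, OF s(1)] Cons.IH[OF s(2)]]
    by (simp only:)
qed

lemma parikh_path_imp_path:
  "parikh_path \<delta> X p v q \<Longrightarrow> \<exists>u. path \<delta> p u q \<and> count_list u = v"
proof (induction rule: parikh_path.induct)
  case (empty p)
  show ?case by (rule exI[of _ "[]"]) (simp add: count_list_Nil_fun)
next
  case (letter q p a)
  then show ?case by (intro exI[of _ "[a]"]) auto
next
  case (join s p v v' q)
  then obtain u u' where "path \<delta> p u s" "count_list u = v" "path \<delta> s u' q" "count_list u' = v'"
    by blast
  then show ?case by (intro exI[of _ "u @ u'"]) (auto simp: path_append count_list_append_fun)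
qed

section \<open>Buchi languages and Parikh vectors of infinite words\<close>

lemma INFM_shift: "(\<exists>\<^sub>\<infinity>i. P (i + k)) \<longleftrightarrow> (\<exists>\<^sub>\<infinity>i::nat. P i)"
  using eventually_sequentially_seg[of "\<lambda>i. \<not> P i" k]
  by (simp add: frequently_def cofinite_eq_sequentially)

lemma parikh_conc:
  assumes "range v \<subseteq> limit v"
  shows "parikh (u \<frown> v) = mask_add (count_list u) (limit v)"
proof
  fix \<sigma>
  show "parikh (u \<frown> v) \<sigma> = mask_add (count_list u) (limit v) \<sigma>"
  proof (cases "\<sigma> \<in> limit v")
    case True
    then have "\<sigma> \<in> limit (u \<frown> v)" by simp
    then have "infinite ((u \<frown> v) -` {\<sigma>})" by (metis limit_vimage)
    then have "infinite {i. (u \<frown> v) i = \<sigma>}" by (simp add: vimage_def)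
    then show ?thesis using True by (simp add: parikh_def mask_add_def)
  next
    case False
    then have "\<sigma> \<notin> range v" using assms by blast
    then have "{i. (u \<frown> v) i = \<sigma>} = {i. i < length u \<and> u ! i = \<sigma>}"
      by (auto simp: conc_def split: if_splits) (metis rangeI)
    then show ?thesis using False
      by (simp add: parikh_def mask_add_def count_list_eq_length_filter length_filter_conv_card
          eq_commute)
  qed
qed

lemma parikh_conc_iter:
  assumes "ms \<noteq> []"
  shows "parikh (u \<frown> ms\<^sup>\<omega>) = mask_add (count_list u) (set ms)"
proof -
  have "range ms\<^sup>\<omega> \<subseteq> set ms" using assms by auto
  then show ?thesis using parikh_conc[of "ms\<^sup>\<omega>" u] assms by simp
qed

lemma parikh_prefix_limit:
  fixes w :: "'a::finite word"
  obtains k where "parikh w = mask_add (count_list (prefix k w)) (limit w)"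
    and "range (suffix k w) = limit w"
proof -
  obtain k where k: "limit w = range (suffix k w)"
    using limit_is_suffix[of w] by auto
  have "range (suffix k w) \<subseteq> limit (suffix k w)" using k by simp
  then have "parikh (prefix k w \<frown> suffix k w)
      = mask_add (count_list (prefix k w)) (limit (suffix k w))"
    by (rule parikh_conc)
  then show ?thesis using k that by (simp flip: prefix_suffix)
qed

definition buchi_lang :: "('q \<Rightarrow> 'a \<Rightarrow> 'q set) \<Rightarrow> 'q set \<Rightarrow> 'q set \<Rightarrow> 'a word set" where
  "buchi_lang \<delta> I F = {w. \<exists>r. r 0 \<in> I \<and> (\<forall>i. r (Suc i) \<in> \<delta> (r i) (w i)) \<and> (\<exists>\<^sub>\<infinity>i. r i \<in> F)}"

lemma lang_eq_buchi_lang: "lang A = buchi_lang (trans A) (initial A) (accepting A)"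
  by (simp add: lang_def accepting_run_def buchi_lang_def)

lemma buchi_lang_conc:
  assumes "path \<delta> p u q" and "w \<in> buchi_lang \<delta> {q} F"
  shows "u \<frown> w \<in> buchi_lang \<delta> {p} F"
  using assms(1)
proof (induction u arbitrary: p)
  case Nil
  then show ?case using assms(2) by simp
next
  case (Cons a u)
  then obtain s where s: "s \<in> \<delta> p a" "path \<delta> s u q" by auto
  then obtain r where r: "r 0 = s" "\<forall>i. r (Suc i) \<in> \<delta> (r i) ((u \<frown> w) i)" "\<exists>\<^sub>\<infinity>i. r i \<in> F"
    using Cons.IH unfolding buchi_lang_def by blast
  have "(p ## r) (Suc i) \<in> \<delta> ((p ## r) i) ((a ## u \<frown> w) i)" for i
    using r s by (cases i) auto
  moreover have "\<exists>\<^sub>\<infinity>i. (p ## r) i \<in> F"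
    using r(3) INFM_shift[of "\<lambda>i. (p ## r) i \<in> F" 1] by simp
  ultimately show ?case unfolding buchi_lang_def build_cons
    by (intro CollectI exI[of _ "p ## r"]) simp
qed

lemma buchi_lang_split:
  assumes "w \<in> buchi_lang \<delta> I F"
  obtains p q where "p \<in> I" "path \<delta> p (prefix k w) q" "suffix k w \<in> buchi_lang \<delta> {q} F"
proof -
  obtain r where r: "r 0 \<in> I" "\<forall>i. r (Suc i) \<in> \<delta> (r i) (w i)" "\<exists>\<^sub>\<infinity>i. r i \<in> F"
    using assms unfolding buchi_lang_def by blast
  have "path \<delta> (r 0) (prefix j w) (r j)" for j
    by (induction j) (use r(2) in \<open>auto simp: path_append\<close>)
  moreover have "suffix k w \<in> buchi_lang \<delta> {r k} F"
    unfolding buchi_lang_def using r(2,3) INFM_shift[of "\<lambda>i. r i \<in> F" k]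
    by (intro CollectI exI[of _ "suffix k r"]) (auto simp: add.commute)
  ultimately show ?thesis using that r(1) by blast
qed

lemma buchi_run_closed:
  assumes "r 0 \<in> Q" "\<forall>i. r (Suc i) \<in> \<delta> (r i) (w i)" "\<And>q a. q \<in> Q \<Longrightarrow> \<delta> q a \<subseteq> Q"
  shows "r i \<in> Q"
  by (induction i) (use assms in auto)

lemma buchi_lang_UN:
  "buchi_lang (\<lambda>(i, q) a. {i} \<times> \<delta> i q a) (Sigma K I) (UNIV \<times> F)
     = (\<Union>i\<in>K. buchi_lang (\<delta> i) (I i) F)"
proof (intro equalityI subsetI)
  fix w assume "w \<in> buchi_lang (\<lambda>(i, q) a. {i} \<times> \<delta> i q a) (Sigma K I) (UNIV \<times> F)"
  then obtain r where r: "r 0 \<in> Sigma K I"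
    "\<forall>t. r (Suc t) \<in> (\<lambda>(i, q) a. {i} \<times> \<delta> i q a) (r t) (w t)" "\<exists>\<^sub>\<infinity>t. r t \<in> UNIV \<times> F"
    unfolding buchi_lang_def mem_Collect_eq by (elim exE conjE)
  have step: "fst (r (Suc t)) = fst (r t) \<and> snd (r (Suc t)) \<in> \<delta> (fst (r t)) (snd (r t)) (w t)" for t
    using r(2)[rule_format, of t] by (cases "r t") auto
  have "fst (r t) = fst (r 0)" for t
    by (induction t) (use step in auto)
  then have "snd (r (Suc t)) \<in> \<delta> (fst (r 0)) (snd (r t)) (w t)" for t
    using step by metis
  moreover have "\<exists>\<^sub>\<infinity>t. snd (r t) \<in> F" using r(3) by (rule INFM_mono) auto
  ultimately have "w \<in> buchi_lang (\<delta> (fst (r 0))) (I (fst (r 0))) F"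
    unfolding buchi_lang_def using r(1) by (intro CollectI exI[of _ "snd \<circ> r"]) auto
  then show "w \<in> (\<Union>i\<in>K. buchi_lang (\<delta> i) (I i) F)" using r(1) by auto
next
  fix w assume "w \<in> (\<Union>i\<in>K. buchi_lang (\<delta> i) (I i) F)"
  then obtain i r where "i \<in> K" "r 0 \<in> I i" "\<forall>t. r (Suc t) \<in> \<delta> i (r t) (w t)" "\<exists>\<^sub>\<infinity>t. r t \<in> F"
    unfolding buchi_lang_def by blast
  then show "w \<in> buchi_lang (\<lambda>(i, q) a. {i} \<times> \<delta> i q a) (Sigma K I) (UNIV \<times> F)"
    unfolding buchi_lang_def by (intro CollectI exI[of _ "\<lambda>t. (i, r t)"]) auto
qed

definition encode_nba :: "('q \<Rightarrow> nat) \<Rightarrow> 'q set \<Rightarrow> ('q \<Rightarrow> 'a \<Rightarrow> 'q set) \<Rightarrow> 'q set \<Rightarrow> 'q set \<Rightarrow> 'a nba"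
  where "encode_nba f Q \<delta> I F = \<lparr>states = f ` Q, trans = (\<lambda>n a. f ` (\<delta> (the_inv_into Q f n) a \<inter> Q)),
     initial = f ` I, accepting = f ` (F \<inter> Q)\<rparr>"

lemma wf_encode_nba: "finite Q \<Longrightarrow> I \<subseteq> Q \<Longrightarrow> wf_nba (encode_nba f Q \<delta> I F)"
  unfolding wf_nba_def encode_nba_def by auto

lemma lang_encode_nba_subset:
  assumes f: "inj_on f Q" and I: "I \<subseteq> Q"
  shows "lang (encode_nba f Q \<delta> I F) \<subseteq> buchi_lang \<delta> I F"
proof
  let ?g = "the_inv_into Q f"
  have g_f: "q \<in> Q \<Longrightarrow> ?g (f q) = q" for q using f by (rule the_inv_into_f_f)
  fix w assume "w \<in> lang (encode_nba f Q \<delta> I F)"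
  then obtain r where r: "r 0 \<in> f ` I" "\<forall>i. r (Suc i) \<in> f ` (\<delta> (?g (r i)) (w i) \<inter> Q)"
    "\<exists>\<^sub>\<infinity>i. r i \<in> f ` (F \<inter> Q)"
    unfolding lang_eq_buchi_lang buchi_lang_def encode_nba_def by auto
  have "?g (r 0) \<in> I" using r(1) I g_f by auto
  moreover have "?g (r (Suc i)) \<in> \<delta> (?g (r i)) (w i)" for i
  proof -
    obtain s where "s \<in> \<delta> (?g (r i)) (w i) \<inter> Q" "r (Suc i) = f s" using r(2) by blast
    then show ?thesis by (simp add: g_f)
  qed
  moreover have "\<exists>\<^sub>\<infinity>i. ?g (r i) \<in> F" using r(3) by (rule INFM_mono) (use g_f in auto)
  ultimately show "w \<in> buchi_lang \<delta> I F"
    unfolding buchi_lang_def by (intro CollectI exI[of _ "?g \<circ> r"]) simp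
qed

lemma buchi_lang_subset_lang_encode_nba:
  assumes f: "inj_on f Q" and I: "I \<subseteq> Q" and \<delta>: "\<And>q a. q \<in> Q \<Longrightarrow> \<delta> q a \<subseteq> Q"
  shows "buchi_lang \<delta> I F \<subseteq> lang (encode_nba f Q \<delta> I F)"
proof
  fix w assume "w \<in> buchi_lang \<delta> I F"
  then obtain r where r: "r 0 \<in> I" "\<forall>i. r (Suc i) \<in> \<delta> (r i) (w i)" "\<exists>\<^sub>\<infinity>i. r i \<in> F"
    unfolding buchi_lang_def by blast
  have rQ: "r i \<in> Q" for i using buchi_run_closed[of r Q \<delta> w] r I \<delta> by blast
  have "f (r (Suc i)) \<in> f ` (\<delta> (the_inv_into Q f (f (r i))) (w i) \<inter> Q)" for i
    using r(2) rQ f by (auto simp: the_inv_into_f_f)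
  moreover have "\<exists>\<^sub>\<infinity>i. f (r i) \<in> f ` (F \<inter> Q)" using r(3) by (rule INFM_mono) (use rQ in auto)
  ultimately show "w \<in> lang (encode_nba f Q \<delta> I F)"
    unfolding lang_eq_buchi_lang buchi_lang_def encode_nba_def using r(1)
    by (intro CollectI exI[of _ "f \<circ> r"]) auto
qed

lemma finite_buchi_lang_nba:
  fixes \<delta> :: "'q \<Rightarrow> 'a \<Rightarrow> 'q set"
  assumes "finite Q" "I \<subseteq> Q" "\<And>q a. q \<in> Q \<Longrightarrow> \<delta> q a \<subseteq> Q"
  obtains A :: "'a nba" where "wf_nba A" "lang A = buchi_lang \<delta> I F"
proof -
  obtain f :: "'q \<Rightarrow> nat" where "inj_on f Q"
    using finite_imp_inj_to_nat_seg[OF assms(1)] by blast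
  then show ?thesis
    using that[OF wf_encode_nba] assms lang_encode_nba_subset buchi_lang_subset_lang_encode_nba
    by (metis subset_antisym)
qed

lemma parikh_perm_closure: "parikh ` perm_closure A = parikh ` lang A"
proof -
  have "perm_closure A = parikh -` (parikh ` lang A)"
    unfolding perm_closure_def vimage_def image_iff by metis
  then show ?thesis by auto
qed

section \<open>Parikh images of automata are masked semilinear\<close>

definition mask_accepting :: "'a nba \<Rightarrow> 'a set \<Rightarrow> nat \<Rightarrow> bool" where
  "mask_accepting A m q \<longleftrightarrow>
     (\<exists>w\<in>buchi_lang (trans A) {q} (accepting A). range w = m \<and> limit w = m)"

definition prefix_parikh :: "'a nba \<Rightarrow> 'a set \<Rightarrow> ('a \<Rightarrow> nat) set" where
  "prefix_parikh A m = (\<Union>p\<in>initial A. \<Union>q\<in>{q\<in>states A. mask_accepting A m q}.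
     parikh_paths (trans A) (states A) p q)"

lemma semilinear_prefix_parikh:
  fixes A :: "'a::finite nba"
  assumes "wf_nba A"
  shows "semilinear (prefix_parikh A m)"
proof -
  have "finite (states A)" "finite (initial A)"
    using assms by (auto simp: wf_nba_def intro: finite_subset)
  then show ?thesis
    unfolding prefix_parikh_def by (intro semilinear_UN semilinear_parikh_paths) auto
qed

lemma parikh_lang_subset_prefix_parikh:
  fixes A :: "'a::finite nba"
  assumes wf: "wf_nba A"
  shows "parikh ` lang A \<subseteq> (\<Union>m\<in>{m. m \<noteq> {}}. (\<lambda>x. mask_add x m) ` prefix_parikh A m)"
proof
  fix y assume "y \<in> parikh ` lang A"
  then obtain w where y: "y = parikh w" and w: "w \<in> buchi_lang (trans A) (initial A) (accepting A)"
    by (auto simp: lang_eq_buchi_lang)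
  obtain k where parikh_w: "parikh w = mask_add (count_list (prefix k w)) (limit w)"
    and suffix_range: "range (suffix k w) = limit w"
    by (rule parikh_prefix_limit)
  obtain p q where p: "p \<in> initial A" and pq: "path (trans A) p (prefix k w) q"
    and q: "suffix k w \<in> buchi_lang (trans A) {q} (accepting A)"
    using w by (rule buchi_lang_split)
  have "limit w \<noteq> {}" using limit_nonempty[of w] by auto
  moreover have "q \<in> states A"
    using path_target_closed[OF pq] p wf by (auto simp: wf_nba_def)
  moreover have "mask_accepting A (limit w) q"
    unfolding mask_accepting_def
    by (rule bexI[OF _ q]) (simp only: suffix_range limit_suffix simp_thms)
  moreover have "count_list (prefix k w) \<in> parikh_paths (trans A) (states A) p q"
    unfolding parikh_paths_def using path_imp_parikh_path[OF pq] wf by (auto simp: wf_nba_def)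
  ultimately show "y \<in> (\<Union>m\<in>{m. m \<noteq> {}}. (\<lambda>x. mask_add x m) ` prefix_parikh A m)"
    unfolding y parikh_w prefix_parikh_def using p by blast
qed

lemma prefix_parikh_subset_parikh_lang:
  "(\<lambda>x. mask_add x m) ` prefix_parikh A m \<subseteq> parikh ` lang A"
proof
  fix y assume "y \<in> (\<lambda>x. mask_add x m) ` prefix_parikh A m"
  then obtain v where y: "y = mask_add v m" and "v \<in> prefix_parikh A m" by blast
  then obtain p q where p: "p \<in> initial A"
    and q: "mask_accepting A m q" and v: "parikh_path (trans A) (states A) p v q"
    unfolding prefix_parikh_def parikh_paths_def by blast
  obtain u where u: "path (trans A) p u q" "count_list u = v"
    using parikh_path_imp_path[OF v] by blast
  obtain w where w: "w \<in> buchi_lang (trans A) {q} (accepting A)" "range w = m" "limit w = m"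
    using q unfolding mask_accepting_def by blast
  have "u \<frown> w \<in> lang A"
    using buchi_lang_conc[OF u(1) w(1)] p by (auto simp: lang_eq_buchi_lang buchi_lang_def)
  moreover have "parikh (u \<frown> w) = y"
    using parikh_conc[of w u] w u y by simp
  ultimately show "y \<in> parikh ` lang A" by blast
qed

lemma masked_semilinear_parikh_perm_closure:
  fixes A :: "'a::finite nba"
  assumes "wf_nba A"
  shows "masked_semilinear (parikh ` perm_closure A)"
proof -
  have "parikh ` perm_closure A = (\<Union>m\<in>{m. m \<noteq> {}}. (\<lambda>x. mask_add x m) ` prefix_parikh A m)"
    unfolding parikh_perm_closure
    using parikh_lang_subset_prefix_parikh[OF assms] prefix_parikh_subset_parikh_lang by blast
  then show ?thesis
    unfolding masked_semilinear_def using semilinear_prefix_parikh[OF assms] by blast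
qed

section \<open>Masked semilinear sets are Parikh images of automata\<close>

lemma count_list_surj: "\<exists>u. count_list u = (x :: 'a::finite \<Rightarrow> nat)"
proof -
  obtain u where "mset u = Abs_multiset x" using ex_mset by blast
  then have "count_list u = x" by (simp add: fun_eq_iff flip: count_mset)
  then show ?thesis ..
qed

lemma count_list_snoc_drain:
  "0 < x \<sigma> \<Longrightarrow> count_list (u @ [\<sigma>]) + x(\<sigma> := x \<sigma> - 1) = count_list u + x"
  by (auto simp: fun_eq_iff)

lemma count_list_Cons_eq:
  assumes "count_list (a # u) = x"
  shows "0 < x a" "count_list u = x(a := x a - 1)"
proof -
  have x: "x \<tau> = (if a = \<tau> then count_list u \<tau> + 1 else count_list u \<tau>)" for \<tau>
    using assms by auto
  show "0 < x a" using x[of a] by simp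
  show "count_list u = x(a := x a - 1)" using x by (simp add: fun_eq_iff)
qed

lemma ex_step_into: "\<not> P (0::nat) \<Longrightarrow> P n \<Longrightarrow> \<exists>m. \<not> P m \<and> P (Suc m)"
  by (induction n) auto

text \<open>A component \<open>(ms, b, P)\<close> stands for the masked linear set \<open>(b + P*) \<oplus> set ms\<close>; the mask
  is a list because the automaton below cycles through it. In state \<open>Drain x\<close> the automaton
  still has to read a word with Parikh vector \<open>x\<close>; from the hub \<open>Drain 0\<close> it either starts a
  period \<open>p \<in> P\<close> by reading one of its letters or enters the cycle \<open>Cycle j\<close> through \<open>ms\<close>.\<close>

type_synonym 'a masked_linear = "'a list \<times> ('a \<Rightarrow> nat) \<times> ('a \<Rightarrow> nat) set"

fun masked_linear_set :: "'a masked_linear \<Rightarrow> ('a \<Rightarrow> enat) set" where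
  "masked_linear_set (ms, b, P) = (\<lambda>x. mask_add x (set ms)) ` (b +o monoid_closure P)"

datatype 'a ml_state = Drain "'a \<Rightarrow> nat" | Cycle nat

definition cycle_step :: "'a list \<Rightarrow> nat \<Rightarrow> 'a \<Rightarrow> 'a ml_state set" where
  "cycle_step ms j \<sigma> = (if \<sigma> = ms ! j then {Cycle (Suc j mod length ms)} else {})"

fun ml_trans :: "'a masked_linear \<Rightarrow> 'a ml_state \<Rightarrow> 'a \<Rightarrow> 'a ml_state set" where
  "ml_trans (ms, b, P) (Drain x) \<sigma> =
     (if x = 0 then {Drain (p(\<sigma> := p \<sigma> - 1)) | p. p \<in> P \<and> 0 < p \<sigma>} \<union> cycle_step ms 0 \<sigma>
      else if 0 < x \<sigma> then {Drain (x(\<sigma> := x \<sigma> - 1))} else {})"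
| "ml_trans (ms, b, P) (Cycle j) \<sigma> = cycle_step ms j \<sigma>"

fun ml_initial :: "'a masked_linear \<Rightarrow> 'a ml_state" where
  "ml_initial (ms, b, P) = Drain b"

fun ml_states :: "'a masked_linear \<Rightarrow> 'a ml_state set" where
  "ml_states (ms, b, P) = Drain ` {x. \<forall>\<sigma>. x \<sigma> \<le> b \<sigma> + (\<Sum>p\<in>P. p \<sigma>)} \<union> Cycle ` {..<length ms}"

lemma Drain_in_ml_states:
  "Drain x \<in> ml_states (ms, b, P) \<longleftrightarrow> (\<forall>\<sigma>. x \<sigma> \<le> b \<sigma> + (\<Sum>p\<in>P. p \<sigma>))"
  by auto

lemma finite_ml_states: "finite (ml_states (c :: 'a::finite masked_linear))"
proof -
  have "finite {x :: 'a \<Rightarrow> nat. \<forall>\<sigma>. x \<sigma> \<le> B \<sigma>}" for B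
  proof -
    have "{x :: 'a \<Rightarrow> nat. \<forall>\<sigma>. x \<sigma> \<le> B \<sigma>} = Pi\<^sub>E UNIV (\<lambda>\<sigma>. {..B \<sigma>})"
      by (auto simp: PiE_UNIV_domain)
    then show ?thesis by (simp add: finite_PiE)
  qed
  then show ?thesis by (cases c) auto
qed

lemma ml_initial_in_states: "ml_initial c \<in> ml_states c"
  by (cases c) auto

lemma ml_trans_closed:
  assumes "ms \<noteq> []" "finite P" "q \<in> ml_states (ms, b, P)"
  shows "ml_trans (ms, b, P) q \<sigma> \<subseteq> ml_states (ms, b, P)"
proof -
  have decrement: "Drain (x(\<tau> := x \<tau> - 1)) \<in> ml_states (ms, b, P)"
    if "Drain x \<in> ml_states (ms, b, P)" for x \<tau>
    using that unfolding Drain_in_ml_states by (metis diff_le_self fun_upd_apply le_trans)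
  have period: "Drain p \<in> ml_states (ms, b, P)" if "p \<in> P" for p
  proof -
    have "p \<sigma> \<le> (\<Sum>p\<in>P. p \<sigma>)" for \<sigma> using that assms(2) by (intro member_le_sum) auto
    then show ?thesis unfolding Drain_in_ml_states by (simp add: trans_le_add2)
  qed
  have cycle: "cycle_step ms j \<sigma> \<subseteq> ml_states (ms, b, P)" for j
    using assms(1) by (auto simp: cycle_step_def)
  show ?thesis
  proof (cases q)
    case (Drain x)
    then show ?thesis
      using assms(3) decrement[OF period] decrement cycle[of 0]
      by (auto simp del: ml_states.simps)
  qed (use cycle in simp)
qed

lemma ml_run_drain_invariant:
  assumes r0: "r 0 = Drain b" and step: "\<And>i. r (Suc i) \<in> ml_trans (ms, b, P) (r i) (w i)"
  shows "r t = Drain x \<Longrightarrow> count_list (prefix t w) + x \<in> b +o monoid_closure P"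
proof (induction t arbitrary: x)
  case 0
  then show ?case using r0 set_plus_intro2[OF monoid_closure.zero, of b P]
    by (simp add: count_list_Nil_fun)
next
  case (Suc t)
  obtain y where y: "r t = Drain y"
    using step[of t] Suc.prems by (cases "r t") (auto simp: cycle_step_def split: if_splits)
  then have IH: "count_list (prefix t w) + y \<in> b +o monoid_closure P" by (rule Suc.IH)
  have prefix_Suc: "prefix (Suc t) w = prefix t w @ [w t]" by simp
  have trans: "Drain x \<in> ml_trans (ms, b, P) (Drain y) (w t)" using step[of t] y Suc.prems by simp
  show ?case
  proof (cases "y = 0")
    case True
    with trans obtain p where "p \<in> P" "0 < p (w t)" "x = p(w t := p (w t) - 1)"
      by (auto simp: cycle_step_def split: if_splits)
    then have "count_list (prefix (Suc t) w) + x = (count_list (prefix t w) + y) + p"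
      using True by (simp only: prefix_Suc count_list_snoc_drain add_0_right)
    then show ?thesis using coset_add_generator[OF IH \<open>p \<in> P\<close>] by (simp only:)
  next
    case False
    with trans have "0 < y (w t)" "x = y(w t := y (w t) - 1)" by (auto split: if_splits)
    then have "count_list (prefix (Suc t) w) + x = count_list (prefix t w) + y"
      by (simp only: prefix_Suc count_list_snoc_drain)
    then show ?thesis using IH by (simp only:)
  qed
qed

lemma ml_run_cycle:
  assumes "ms \<noteq> []" and step: "\<And>i. r (Suc i) \<in> ml_trans (ms, b, P) (r i) (w i)"
    and M: "r M = Drain x" "r (Suc M) = Cycle j"
  shows "x = 0" "suffix M w = ms\<^sup>\<omega>"
proof -
  let ?L = "length ms"
  have entry: "x = 0" "w M = ms ! 0" "j = 1 mod ?L"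
    using step[of M] M by (auto simp: cycle_step_def split: if_splits)
  then show "x = 0" by simp
  have "w (M + k) = ms ! (k mod ?L) \<and> r (Suc (M + k)) = Cycle (Suc k mod ?L)" for k
  proof (induction k)
    case 0 then show ?case using entry M by simp
  next
    case (Suc k)
    then have "r (Suc (M + Suc k)) \<in> cycle_step ms (Suc k mod ?L) (w (M + Suc k))"
      using step[of "M + Suc k"] by simp
    then show ?case by (auto simp: cycle_step_def mod_Suc_eq split: if_splits)
  qed
  then show "suffix M w = ms\<^sup>\<omega>" using assms(1) by (auto simp: fun_eq_iff)
qed

lemma ml_sound:
  assumes ms: "ms \<noteq> []" and w: "w \<in> buchi_lang (ml_trans (ms, b, P)) {Drain b} (range Cycle)"
  shows "parikh w \<in> masked_linear_set (ms, b, P)"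
proof -
  obtain r where r0: "r 0 = Drain b" and step: "\<And>i. r (Suc i) \<in> ml_trans (ms, b, P) (r i) (w i)"
    and acc: "\<exists>\<^sub>\<infinity>i. r i \<in> range Cycle"
    using w unfolding buchi_lang_def by blast
  obtain t where "r t \<in> range Cycle" using INFM_EX[OF acc] by blast
  then have "\<exists>M. r M \<notin> range Cycle \<and> r (Suc M) \<in> range Cycle"
    using ex_step_into[of "\<lambda>i. r i \<in> range Cycle" t] r0 by auto
  then obtain M where "r M \<notin> range Cycle" "r (Suc M) \<in> range Cycle" by blast
  then obtain x j where M: "r M = Drain x" "r (Suc M) = Cycle j"
    by (metis ml_state.exhaust rangeE rangeI)
  have "parikh w = mask_add (count_list (prefix M w)) (set ms)"
    using prefix_suffix[of w M] parikh_conc_iter[OF ms] ml_run_cycle(2)[OF ms step M] by metis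
  moreover have "count_list (prefix M w) \<in> b +o monoid_closure P"
    using ml_run_drain_invariant[OF r0 step M(1)] unfolding ml_run_cycle(1)[OF ms step M]
    by (simp only: add_0_right)
  ultimately show ?thesis by simp
qed

lemma ml_drain_path:
  "count_list u = x \<Longrightarrow> path (ml_trans (ms, b, P)) (Drain x) u (Drain 0)"
proof (induction u arbitrary: x)
  case Nil
  then show ?case by (simp add: count_list_Nil_fun)
next
  case (Cons a u)
  have "Drain (x(a := x a - 1)) \<in> ml_trans (ms, b, P) (Drain x) a"
    using count_list_Cons_eq(1)[OF Cons.prems] by auto
  with Cons.IH[OF count_list_Cons_eq(2)[OF Cons.prems]] show ?case
    unfolding path.simps by blast
qed

lemma ml_loop_path:
  fixes P :: "('a::finite \<Rightarrow> nat) set"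
  assumes "v \<in> monoid_closure P"
  shows "\<exists>u. path (ml_trans (ms, b, P)) (Drain 0) u (Drain 0) \<and> count_list u = v"
  using assms
proof (induction v rule: monoid_closure.induct)
  case zero
  show ?case by (rule exI[of _ "[]"]) (simp add: count_list_Nil_fun)
next
  case (plus p v)
  then obtain u where u: "path (ml_trans (ms, b, P)) (Drain 0) u (Drain 0)" "count_list u = v"
    by blast
  obtain u' where u': "count_list u' = p" using count_list_surj by blast
  have "path (ml_trans (ms, b, P)) (Drain 0) u' (Drain 0)"
  proof (cases u')
    case Nil
    then show ?thesis by simp
  next
    case (Cons a u'')
    then have "0 < p a" "count_list u'' = p(a := p a - 1)"
      using count_list_Cons_eq u' by auto
    then show ?thesis using Cons plus.hyps ml_drain_path[of u'' "p(a := p a - 1)"] by auto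
  qed
  then have "path (ml_trans (ms, b, P)) (Drain 0) (u' @ u) (Drain 0)"
    using u(1) unfolding path_append by blast
  moreover have "count_list (u' @ u) = p + v" by (simp only: count_list_append_fun u' u(2))
  ultimately show ?case by blast
qed

lemma ml_iter_accepted:
  assumes "ms \<noteq> []"
  shows "ms\<^sup>\<omega> \<in> buchi_lang (ml_trans (ms, b, P)) {Drain 0} (range Cycle)"
proof -
  define r :: "nat \<Rightarrow> 'a ml_state"
    where "r i = (if i = 0 then Drain 0 else Cycle (i mod length ms))" for i
  have "r (Suc i) \<in> ml_trans (ms, b, P) (r i) (ms\<^sup>\<omega> i)" for i
    using assms by (auto simp: r_def cycle_step_def mod_Suc_eq)
  moreover have "\<exists>\<^sub>\<infinity>i. r i \<in> range Cycle"
    unfolding INFM_nat by (auto simp: r_def intro: exI[of _ "Suc _"])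
  ultimately show ?thesis
    unfolding buchi_lang_def by (intro CollectI exI[of _ r]) (simp add: r_def)
qed

lemma ml_complete:
  fixes P :: "('a::finite \<Rightarrow> nat) set"
  assumes ms: "ms \<noteq> []" and x: "x \<in> b +o monoid_closure P"
  shows "mask_add x (set ms) \<in> parikh ` buchi_lang (ml_trans (ms, b, P)) {Drain b} (range Cycle)"
proof -
  obtain v where v: "v \<in> monoid_closure P" "x = b + v"
    using x by (auto simp: elt_set_plus_def)
  obtain u where u: "count_list u = b" using count_list_surj by blast
  obtain u' where u': "path (ml_trans (ms, b, P)) (Drain 0) u' (Drain 0)" "count_list u' = v"
    using ml_loop_path[OF v(1)] by blast
  have "path (ml_trans (ms, b, P)) (Drain b) (u @ u') (Drain 0)"
    using ml_drain_path[OF u, where ms = ms and b = b and P = P] u'(1)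
    unfolding path_append by blast
  then have "(u @ u') \<frown> ms\<^sup>\<omega> \<in> buchi_lang (ml_trans (ms, b, P)) {Drain b} (range Cycle)"
    using ml_iter_accepted[OF ms] by (rule buchi_lang_conc)
  moreover have "parikh ((u @ u') \<frown> ms\<^sup>\<omega>) = mask_add x (set ms)"
    using parikh_conc_iter[OF ms] u u'(2) v(2) by (simp add: count_list_append_fun)
  ultimately show ?thesis by (metis image_eqI)
qed

lemma parikh_ml_lang:
  fixes c :: "'a::finite masked_linear"
  assumes "fst c \<noteq> []"
  shows "parikh ` buchi_lang (ml_trans c) {ml_initial c} (range Cycle) = masked_linear_set c"
proof -
  obtain ms b P where c: "c = (ms, b, P)" by (cases c)
  then show ?thesis
    using assms ml_sound ml_complete by (fastforce simp: c)
qed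

lemma masked_semilinear_components:
  fixes S :: "('a::finite \<Rightarrow> enat) set"
  assumes "masked_semilinear S"
  obtains C :: "'a masked_linear set"
  where "finite C" "\<forall>(ms, b, P)\<in>C. ms \<noteq> [] \<and> finite P" "S = (\<Union>c\<in>C. masked_linear_set c)"
proof -
  obtain Sm where Sm: "\<And>m. m \<noteq> {} \<Longrightarrow> semilinear (Sm m)"
    and S: "S = (\<Union>m\<in>{m. m \<noteq> {}}. (\<lambda>x. mask_add x m) ` Sm m)"
    using assms unfolding masked_semilinear_def by blast
  obtain L where L: "\<forall>m\<in>{m. m \<noteq> {}}. finite (L m) \<and> (\<forall>(b, P)\<in>L m. finite P) \<and>
      Sm m = (\<Union>(b, P)\<in>L m. b +o monoid_closure P)"
    using semilinear_family_cosets[of "{m. m \<noteq> {}}" Sm] Sm by auto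
  obtain enum :: "'a set \<Rightarrow> 'a list" where enum: "\<And>m. set (enum m) = m"
    using finite_list[OF finite] by metis
  define C where "C = (\<Union>m\<in>{m. m \<noteq> {}}. (\<lambda>(b, P). (enum m, b, P)) ` L m)"
  have "finite C" unfolding C_def using L by (intro finite_UN_I) auto
  moreover have "\<forall>(ms, b, P)\<in>C. ms \<noteq> [] \<and> finite P"
  proof
    fix c assume "c \<in> C"
    then obtain m bP where "m \<noteq> {}" "bP \<in> L m" "c = (case bP of (b, P) \<Rightarrow> (enum m, b, P))"
      unfolding C_def by auto
    then obtain b P where "m \<noteq> {}" "(b, P) \<in> L m" "c = (enum m, b, P)" by (cases bP) auto
    then show "case c of (ms, b, P) \<Rightarrow> ms \<noteq> [] \<and> finite P" using L enum[of m] by auto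
  qed
  moreover have "(\<Union>c\<in>C. masked_linear_set c) = S"
  proof -
    have component: "masked_linear_set (enum m, bP)
        = (\<lambda>x. mask_add x m) ` (case bP of (b, P) \<Rightarrow> b +o monoid_closure P)" for m bP
      by (cases bP) (simp add: enum)
    have "(\<Union>c\<in>C. masked_linear_set c)
        = (\<Union>m\<in>{m. m \<noteq> {}}. \<Union>bP\<in>L m. masked_linear_set (enum m, bP))"
      unfolding C_def by simp
    also have "\<dots> = S" unfolding S component using L by (simp add: image_UN)
    finally show ?thesis .
  qed
  ultimately show ?thesis using that by blast
qed

lemma nba_of_masked_semilinear:
  fixes S :: "('a::finite \<Rightarrow> enat) set"
  assumes "masked_semilinear S"
  obtains A :: "'a nba" where "wf_nba A" "S = parikh ` perm_closure A"
proof -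
  obtain C :: "'a masked_linear set" where C: "finite C" "\<forall>(ms, b, P)\<in>C. ms \<noteq> [] \<and> finite P"
    and S: "S = (\<Union>c\<in>C. masked_linear_set c)"
    using masked_semilinear_components[OF assms] by blast
  let ?\<delta> = "\<lambda>(c, q) a. {c} \<times> ml_trans c q a" and ?I = "Sigma C (\<lambda>c. {ml_initial c})"
  let ?F = "UNIV \<times> range Cycle"
  have "buchi_lang ?\<delta> ?I ?F = (\<Union>c\<in>C. buchi_lang (ml_trans c) {ml_initial c} (range Cycle))"
    by (rule buchi_lang_UN)
  moreover have "parikh ` buchi_lang (ml_trans c) {ml_initial c} (range Cycle) = masked_linear_set c"
    if "c \<in> C" for c
    using that C(2) by (intro parikh_ml_lang) auto
  ultimately have S_lang: "S = parikh ` buchi_lang ?\<delta> ?I ?F"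
    unfolding S by (simp add: image_UN)
  have "finite (Sigma C ml_states)" by (rule finite_SigmaI[OF C(1) finite_ml_states])
  moreover have "?I \<subseteq> Sigma C ml_states" by (auto intro: ml_initial_in_states)
  moreover have "?\<delta> q a \<subseteq> Sigma C ml_states" if q: "q \<in> Sigma C ml_states" for q a
  proof -
    obtain c s where "q = (c, s)" "c \<in> C" "s \<in> ml_states c" using q by blast
    moreover obtain ms b P where "c = (ms, b, P)" by (cases c)
    ultimately have q: "q = ((ms, b, P), s)" "(ms, b, P) \<in> C" "s \<in> ml_states (ms, b, P)"
      by simp_all
    then have "ms \<noteq> []" "finite P" using C(2) by auto
    then have "ml_trans (ms, b, P) s a \<subseteq> ml_states (ms, b, P)" using q(3) by (rule ml_trans_closed)
    then show ?thesis using q(1,2) by auto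
  qed
  ultimately obtain A :: "'a nba" where "wf_nba A" "lang A = buchi_lang ?\<delta> ?I ?F"
    by (rule finite_buchi_lang_nba)
  then show ?thesis using that S_lang by (simp add: parikh_perm_closure)
qed

theorem theorem1:
  fixes S :: "('a::finite \<Rightarrow> enat) set"
  assumes "S \<subseteq> M_set"
  shows "masked_semilinear S \<longleftrightarrow>
           (\<exists>A :: 'a nba. wf_nba A \<and> S = parikh ` perm_closure A)"
proof
  assume "masked_semilinear S"
  then obtain A :: "'a nba" where "wf_nba A" "S = parikh ` perm_closure A"
    by (rule nba_of_masked_semilinear)
  then show "\<exists>A :: 'a nba. wf_nba A \<and> S = parikh ` perm_closure A" by blast
next
  assume "\<exists>A :: 'a nba. wf_nba A \<and> S = parikh ` perm_closure A"
  then show "masked_semilinear S" using masked_semilinear_parikh_perm_closure by blast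
qed

end
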